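(* For every integer $n\ge 2$, \[ \left\lfloor\frac{n+2\left\lfloor\frac{n-3}{7}\right\rfloor}{3}\right\rfloor\le S_d(n)\le \left\lfloor\frac{n}{2}\right\rfloor . \]
   Context: A word is a finite word over the two-letter alphabet $\{a,b\}$; words are written multiplicatively (e.g. $b^{3}(ab)^2$), and $l(w)$ denotes the length of $w$. A word $w=a_1\cdots a_n$ is a palindrome if $a_i=a_{n-i+1}$ for all $i\le n$, and an antipalindrome if $a_i\neq a_{n-i+1}$ for all $i\le n$. For a word $w$, $S_d(w)$ is the minimal number of letters of $w$ whose deletion from $w$ yields a palindrome or an antipalindrome. For a positive integer $n$, $S_d(n)=\max\{S_d(w): w \text{ a word with } l(w)=n\}$. Here $\lfloor x\rfloor$ denotes the integer part (floor) of $x$. *)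

theory Defs
  imports Complex_Main "HOL-Library.Sublist"
begin

(* Words over the two-letter alphabet {a,b}, encoded as bool lists (a = True, b = False). *)
type_synonym word = "bool list"

definition is_palindrome :: "word \<Rightarrow> bool" where
  "is_palindrome w \<longleftrightarrow> (\<forall>i<length w. w ! i = w ! (length w - 1 - i))"

definition is_antipalindrome :: "word \<Rightarrow> bool" where
  "is_antipalindrome w \<longleftrightarrow> (\<forall>i<length w. w ! i \<noteq> w ! (length w - 1 - i))"

(* Deleting k letters of w yields a word v: v is a subsequence of w of length l(w) - k. *)
definition Sd_word :: "word \<Rightarrow> nat" where
  "Sd_word w = (LEAST k. \<exists>v. subseq v w \<and> length v + k = length w \<and>
                          (is_palindrome v \<or> is_antipalindrome v))"

definition Sd :: "nat \<Rightarrow> nat" where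
  "Sd n = Max (Sd_word ` {w :: word. length w = n})"

end

theory Submission
  imports Defs
begin

(*
  Upper bound: keeping the more frequent letter leaves a palindrome of length at least n/2.

  Lower bound: take w = a^x b^y (ab)^k b^k with 2k < x <= y + k and 2k < y.
  A palindromic subsequence either uses a single letter, or is b^s c b^s with c starting and
  ending in a, so that c b^s embeds into (ab)^k b^k, or is a^s c a^s with c starting and ending
  in b, so that c a^s, after dropping at most y leading b's, embeds into (ab)^k b^k.  In every
  case its length is at most y + 2k.  An antipalindromic subsequence has equally many a's and
  b's; if it takes i > 0 letters from a^x it must end in at least i b's, which all lie after its
  last a inside (ab)^k b^k, so it has at most 2k + 1 <= x letters a.  Hence
  S_d(w) >= n - max(y + 2k, 2x), and for n = 7m + 3 + r the choice k = m, x = 2m + 1 + r div 3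
  gives the bound.
*)

lemma is_palindrome_iff_rev: "is_palindrome v \<longleftrightarrow> rev v = v"
  unfolding is_palindrome_def list_eq_iff_nth_eq
  by (auto simp: rev_nth)

lemma is_antipalindrome_iff: "is_antipalindrome v \<longleftrightarrow> map Not (rev v) = v"
  unfolding is_antipalindrome_def list_eq_iff_nth_eq
  by (auto simp: rev_nth)

lemma rev_Cons_snoc_eq_iff: "rev (x # xs @ [y]) = x # xs @ [y] \<longleftrightarrow> y = x \<and> rev xs = xs"
  by auto

lemma count_list_replicate [simp]:
  "count_list (replicate n x) y = (if x = y then n else 0)"
  by (induction n) auto

lemma count_list_map_Not [simp]: "count_list (map Not xs) x = count_list xs (\<not> x)"
  by (induction xs) auto

lemma length_eq_count_True_plus_False: "length xs = count_list xs True + count_list xs False"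
  by (induction xs) auto

lemma count_list_subseq_le: "subseq xs ys \<Longrightarrow> count_list xs x \<le> count_list ys x"
  unfolding count_list_eq_length_filter by (rule list_emb_length) (rule subseq_filter)

lemma bool_list_cases:
  obtains "xs = []" | ys where "xs = False # ys" | "xs = [True]"
  | ys where "xs = True # False # ys" | ys where "xs = True # True # ys"
  using that by (metis (full_types) list.exhaust)

lemma split_last_True:
  assumes "True \<in> set xs"
  obtains q r where "xs = q @ replicate r False" "q \<noteq> []" "last q = True"
proof -
  obtain ys zs where xs: "xs = ys @ True # zs" and "True \<notin> set zs"
    using split_list_last[OF assms] by blast
  then have "replicate (length zs) False = zs"
    by (intro replicate_length_same) auto
  then show ?thesis using that[of "ys @ [True]" "length zs"] xs by simp
qed

lemma append_eq_append_hd_notin: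
  assumes "xs @ ys = us @ vs" "vs \<noteq> []" "hd vs \<notin> set xs"
  shows "\<exists>zs. us = xs @ zs \<and> ys = zs @ vs"
  using assms by (auto simp: append_eq_append_conv2 hd_append split: if_splits)

lemma append_replicate_eq_imp_le:
  assumes "xs @ replicate i x = ys @ replicate r x" "ys \<noteq> []" "last ys \<noteq> x"
  shows "i \<le> r"
proof (rule ccontr)
  assume "\<not> i \<le> r"
  then have "xs @ replicate (i - r) x @ replicate r x = ys @ replicate r x"
    using assms(1) by (simp add: replicate_add[symmetric])
  then have "ys = xs @ replicate (i - r) x" by simp
  then show False using \<open>\<not> i \<le> r\<close> assms(3) by simp
qed

lemma subseq_appendD2: "subseq (xs @ ys) zs \<Longrightarrow> subseq ys zs"
  by (metis subseq_drop_many subseq_order.order_refl subseq_order.order_trans)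

lemma subseq_replicate_imp_eq_replicate:
  assumes "subseq xs (replicate n x)"
  shows "xs = replicate (length xs) x \<and> length xs \<le> n"
  using list_emb_set[OF assms] list_emb_length[OF assms]
  by (auto intro: replicate_length_same[symmetric])

lemma set_subseq_replicate: "subseq xs (replicate n x) \<Longrightarrow> set xs \<subseteq> {x}"
  by (metis subseq_replicate_imp_eq_replicate in_set_replicate subsetI singletonI)

lemma subseq_replicate_appendE:
  assumes "subseq xs (replicate n x @ ys)"
  obtains i zs where "i \<le> n" "xs = replicate i x @ zs" "subseq zs ys"
  using assms
  by (elim subseq_appendE) (metis subseq_replicate_imp_eq_replicate)

lemma subseq_replicate_append_skip:
  "subseq xs (replicate n x @ ys) \<Longrightarrow> xs \<noteq> [] \<Longrightarrow> hd xs \<noteq> x \<Longrightarrow> subseq xs ys"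
  by (induction n) (auto simp: neq_Nil_conv)

lemma palindrome_outer_runs:
  "rev v = v \<Longrightarrow> (\<not> x) \<in> set v \<Longrightarrow>
   \<exists>s c. v = replicate s x @ c @ replicate s x \<and> c \<noteq> [] \<and> hd c = (\<not> x) \<and> last c = (\<not> x)"
proof (induction "length v" arbitrary: v rule: less_induct)
  case less
  obtain y t where v: "v = y # t" using less.prems(2) by (cases v) auto
  show ?case
  proof (cases "y = x")
    case False
    have "last v = hd v" using less.prems(1) by (metis hd_rev)
    then show ?thesis using False v
      by (intro exI[of _ 0] exI[of _ v]) auto
  next
    case True
    obtain u z where t: "t = u @ [z]"
      using less.prems(2) v True by (cases t rule: rev_cases) auto
    have "z = x" "rev u = u"
      using less.prems(1) by (simp_all only: v t True rev_Cons_snoc_eq_iff)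
    moreover have "(\<not> x) \<in> set u"
      using less.prems(2) \<open>z = x\<close> by (simp add: v t True)
    ultimately obtain s c where "u = replicate s x @ c @ replicate s x"
        and "c \<noteq> []" "hd c = (\<not> x)" "last c = (\<not> x)"
      using less.hyps[of u] v t by auto
    then show ?thesis using v True t \<open>z = x\<close>
      by (intro exI[of _ "Suc s"] exI[of _ c]) (simp add: replicate_append_same)
  qed
qed

definition alternating :: "nat \<Rightarrow> word" where
  "alternating k = concat (replicate k [True, False])"

lemma alternating_simps [simp]:
  "alternating 0 = []"
  "alternating (Suc k) = True # False # alternating k"
  by (simp_all add: alternating_def)

lemma count_list_alternating [simp]: "count_list (alternating k) x = k"
  by (induction k) auto

lemma length_alternating [simp]: "length (alternating k) = 2 * k"
  by (induction k) auto

lemma subseq_alternating_a_then_bs: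
  assumes "subseq (q @ replicate s False) (alternating k @ replicate z False)"
    and "q \<noteq> []" and "last q = True"
  shows "length q + 2 * s \<le> 2 * k + 2 * z + 1 \<and> count_list q True + s \<le> k + z + 1"
  using assms
proof (induction k arbitrary: q)
  case 0
  then show ?case
    using set_subseq_replicate[of "q @ replicate s False"] last_in_set[of q] by auto
next
  case (Suc k)
  from Suc.prems show ?case
  proof (cases q rule: bool_list_cases)
    case ys: (2 ys)
    then show ?thesis using Suc.IH[of ys] Suc.prems by (auto split: if_splits)
  next
    case 3
    then have "subseq (replicate s False) (False # alternating k @ replicate z False)"
      using Suc.prems(1) by simp
    from count_list_subseq_le[OF this, of False] show ?thesis using 3 by simp
  next
    case ys: (4 ys)
    then show ?thesis using Suc.IH[of ys] Suc.prems by (auto split: if_splits)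
  next
    case ys: (5 ys)
    then show ?thesis using Suc.IH[of "True # ys"] Suc.prems by (auto split: if_splits)
  qed simp
qed

lemma subseq_alternating_trailing_as:
  assumes "subseq (c @ replicate p True) (alternating k @ replicate z False)"
    and "p \<noteq> 0" and "c = [] \<or> last c = False"
  shows "length c + 2 * p \<le> 2 * k"
  using assms
proof (induction k arbitrary: c p)
  case 0
  then show ?case
    using set_subseq_replicate[of "c @ replicate p True"] by auto
next
  case (Suc k)
  from Suc.prems(3) show ?case
  proof (cases c rule: bool_list_cases)
    case 1
    then obtain p' where p: "p = Suc p'" using Suc.prems(2) by (cases p) auto
    then show ?thesis using Suc.IH[of "[]" p'] Suc.prems(1) 1 by (cases p') auto
  next
    case ys: (2 ys)
    then show ?thesis using Suc.IH[of ys p] Suc.prems by (auto split: if_splits)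
  next
    case ys: (4 ys)
    then show ?thesis using Suc.IH[of ys p] Suc.prems by (auto split: if_splits)
  next
    case ys: (5 ys)
    then show ?thesis using Suc.IH[of "True # ys" p] Suc.prems by (auto split: if_splits)
  qed simp
qed

definition hard_word :: "nat \<Rightarrow> nat \<Rightarrow> nat \<Rightarrow> word" where
  "hard_word x y k = replicate x True @ replicate y False @ alternating k @ replicate k False"

lemma palindrome_subseq_hard_word:
  assumes pal: "rev v = v" and sub: "subseq v (hard_word x y k)"
    and y: "2 * k < y" and xy: "x \<le> y + k"
  shows "length v \<le> y + 2 * k"
proof (cases "True \<in> set v \<and> False \<in> set v")
  case False
  have "count_list v True \<le> x + k" "count_list v False \<le> y + 2 * k"
    using count_list_subseq_le[OF sub, of True] count_list_subseq_le[OF sub, of False]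
    by (simp_all add: hard_word_def)
  then show ?thesis
    using False xy length_eq_count_True_plus_False[of v] by (auto simp: count_list_0_iff)
next
  case True
  let ?R = "alternating k @ replicate k False"
  define b where "b = hd v"
  obtain s c where v: "v = replicate s b @ c @ replicate s b"
    and c: "c \<noteq> []" "hd c = (\<not> b)" "last c = (\<not> b)"
    using palindrome_outer_runs[OF pal, of b] True by (cases b) auto
  have len: "length v = length c + 2 * s"
    using v by simp
  have "s \<noteq> 0"
  proof
    assume "s = 0"
    then have "hd v = hd c" using v by simp
    then show False using c(2) b_def by simp
  qed
  have sub_v: "subseq (replicate s b @ c @ replicate s b) (replicate x True @ replicate y False @ ?R)"
    using sub v unfolding hard_word_def by simp
  show ?thesis
  proof (cases b)
    case False
    then have "b = False" by simp
    then have "subseq (replicate s False @ c @ replicate s False)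
        (replicate x True @ replicate y False @ ?R)"
      using sub_v by (simp only:)
    then have "subseq (replicate s False @ c @ replicate s False) (replicate y False @ ?R)"
      by (rule subseq_replicate_append_skip) (use \<open>s \<noteq> 0\<close> in simp_all)
    then have "subseq (c @ replicate s False) (replicate y False @ ?R)"
      by (rule subseq_appendD2)
    then have "subseq (c @ replicate s False) ?R"
      by (rule subseq_replicate_append_skip) (use c False in auto)
    then have "length c + 2 * s \<le> 4 * k + 1"
      using subseq_alternating_a_then_bs c False by fastforce
    then show ?thesis using len y by simp
  next
    case True
    have "subseq (c @ replicate s True) (replicate x True @ replicate y False @ ?R)"
      using subseq_appendD2[OF sub_v] True by simp
    then have "subseq (c @ replicate s True) (replicate y False @ ?R)"
      by (rule subseq_replicate_append_skip) (use c True in auto)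
    then obtain j u where j: "j \<le> y"
      and u: "c @ replicate s True = replicate j False @ u" "subseq u ?R"
      by (rule subseq_replicate_appendE)
    obtain c' where c': "c = replicate j False @ c'" "u = c' @ replicate s True"
      using append_eq_append_hd_notin[OF u(1)[symmetric]] \<open>s \<noteq> 0\<close> by auto
    have "c' = [] \<or> last c' = False" using c c'(1) True by auto
    then have "length c' + 2 * s \<le> 2 * k"
      using subseq_alternating_trailing_as u(2) c'(2) \<open>s \<noteq> 0\<close> by blast
    then show ?thesis using len c'(1) j by simp
  qed
qed

lemma antipalindrome_subseq_hard_word:
  assumes anti: "map Not (rev v) = v" and sub: "subseq v (hard_word x y k)" and x: "2 * k < x"
  shows "length v \<le> 2 * x"
proof -
  let ?R = "alternating k @ replicate k False"
  have "count_list v False = count_list (map Not (rev v)) False"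
    using anti by simp
  also have "\<dots> = count_list v True"
    by simp
  finally have len: "length v = 2 * count_list v True"
    using length_eq_count_True_plus_False[of v] by simp
  obtain i v' where i: "i \<le> x" and v': "v = replicate i True @ v'"
    and "subseq v' (replicate y False @ ?R)"
    using sub unfolding hard_word_def by (rule subseq_replicate_appendE)
  then obtain j u where v: "v = replicate i True @ replicate j False @ u" and u: "subseq u ?R"
    by (elim subseq_replicate_appendE) simp
  have count_v: "count_list v True = i + count_list u True"
    using v by simp
  have "count_list v True \<le> x"
  proof (cases "True \<in> set u \<and> i \<noteq> 0")
    case False
    have "count_list u True \<le> k" using count_list_subseq_le[OF u, of True] by simp
    then show ?thesis using False count_v i x by (auto simp: count_list_0_iff)
  next
    case True
    then obtain q r where q: "u = q @ replicate r False" "q \<noteq> []" "last q = True"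
      using split_last_True by blast
    have "(replicate r True @ map Not (rev (replicate j False @ q))) @ replicate i False
          = map Not (rev v)"
      using v q(1) by simp
    also have "\<dots> = v" by (rule anti)
    also have "\<dots> = (replicate i True @ replicate j False @ q) @ replicate r False"
      using v q(1) by simp
    finally have "i \<le> r"
      by (rule append_replicate_eq_imp_le) (use q in auto)
    moreover have "count_list q True + r \<le> 2 * k + 1"
      using subseq_alternating_a_then_bs[of q r k k] u q by simp
    ultimately show ?thesis using count_v q(1) x by simp
  qed
  then show ?thesis using len by simp
qed

lemma Sd_word_ge:
  assumes "\<And>v. subseq v w \<Longrightarrow> is_palindrome v \<or> is_antipalindrome v \<Longrightarrow> length v \<le> L"
  shows "length w - L \<le> Sd_word w"
proof -
  let ?P = "\<lambda>k. \<exists>v. subseq v w \<and> length v + k = length w \<and> (is_palindrome v \<or> is_antipalindrome v)"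
  have "?P (length w)"
    by (rule exI[of _ "[]"]) (simp add: is_palindrome_def)
  then have "?P (Sd_word w)"
    unfolding Sd_word_def by (rule LeastI)
  then show ?thesis using assms by fastforce
qed

lemma Sd_word_le_length_minus_count: "Sd_word w \<le> length w - count_list w x"
  unfolding Sd_word_def
proof (rule Least_le)
  have "replicate (count_list w x) x = filter ((=) x) w"
    unfolding count_list_eq_length_filter by (rule replicate_length_same) simp
  then have "is_palindrome (filter ((=) x) w)"
    by (metis is_palindrome_iff_rev rev_replicate)
  then show "\<exists>v. subseq v w \<and> length v + (length w - count_list w x) = length w
             \<and> (is_palindrome v \<or> is_antipalindrome v)"
    by (intro exI[of _ "filter ((=) x) w"])
      (simp add: count_list_eq_length_filter length_filter_le)
qed

lemma Sd_word_le_half: "Sd_word w \<le> length w div 2"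
  using Sd_word_le_length_minus_count[of w True] Sd_word_le_length_minus_count[of w False]
    length_eq_count_True_plus_False[of w]
  by linarith

lemma finite_words_of_length: "finite {w :: word. length w = n}"
  using finite_lists_length_eq[of "UNIV :: bool set" n] by simp

lemma Sd_word_le_Sd: "Sd_word w \<le> Sd (length w)"
  unfolding Sd_def by (rule Max_ge) (simp_all add: finite_words_of_length)

lemma Sd_le_half: "Sd n \<le> n div 2"
  unfolding Sd_def
proof (rule Max.boundedI)
  show "finite (Sd_word ` {w. length w = n})"
    by (simp add: finite_words_of_length)
  show "Sd_word ` {w. length w = n} \<noteq> {}"
    using length_replicate[of n True] by blast
qed (use Sd_word_le_half in auto)

lemma Sd_ge_hard_word:
  assumes "2 * k < x" "2 * k < y" "x \<le> y + k"
  shows "x + y + 3 * k - max (y + 2 * k) (2 * x) \<le> Sd (x + y + 3 * k)"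
proof -
  have "length (hard_word x y k) - max (y + 2 * k) (2 * x) \<le> Sd_word (hard_word x y k)"
  proof (rule Sd_word_ge)
    fix v assume "subseq v (hard_word x y k)" "is_palindrome v \<or> is_antipalindrome v"
    then show "length v \<le> max (y + 2 * k) (2 * x)"
      using palindrome_subseq_hard_word antipalindrome_subseq_hard_word assms
      by (fastforce simp: is_palindrome_iff_rev is_antipalindrome_iff)
  qed
  moreover have "length (hard_word x y k) = x + y + 3 * k"
    by (simp add: hard_word_def)
  ultimately show ?thesis
    using Sd_word_le_Sd[of "hard_word x y k"] by simp
qed

lemma Sd_ge_lower_bound:
  assumes "n \<ge> 3"
  shows "(n + 2 * ((n - 3) div 7)) div 3 \<le> Sd n"
proof -
  define m where "m = (n - 3) div 7"
  define r where "r = (n - 3) mod 7"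
  define t where "t = r div 3"
  have n: "n = 7 * m + 3 + r" and t: "3 * t \<le> r" "r < 3 * t + 3"
    using assms unfolding m_def r_def t_def by auto
  have sum: "(2*m+1 + t) + (2*m+2 + r - t) + 3*m = n"
    using n t by linarith
  have max: "max ((2*m+2 + r - t) + 2*m) (2 * (2*m+1 + t)) = 4*m+2 + r - t"
    using t by (simp add: max_def) linarith
  have "(2*m+1 + t) + (2*m+2 + r - t) + 3*m - max ((2*m+2 + r - t) + 2*m) (2 * (2*m+1 + t))
      \<le> Sd ((2*m+1 + t) + (2*m+2 + r - t) + 3*m)"
    by (rule Sd_ge_hard_word) (use t in linarith)+
  then have "n - (4*m+2 + r - t) \<le> Sd n"
    unfolding sum max .
  moreover have "(n + 2 * m) div 3 = 3 * m + 1 + t"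
    using n t by simp
  ultimately show ?thesis
    using n t unfolding m_def[symmetric] by linarith
qed

theorem theorem1:
  fixes n :: nat
  assumes "n \<ge> 2"
  shows "floor ((real n + 2 * real_of_int (floor ((real n - 3) / 7))) / 3) \<le> int (Sd n)
       \<and> Sd n \<le> n div 2"
proof -
  have "\<lfloor>(real n - 3) / 7\<rfloor> = (int n - 3) div 7"
    using floor_divide_of_int_eq[of "int n - 3" 7] by simp
  moreover have "\<lfloor>(real n + 2 * real_of_int ((int n - 3) div 7)) / 3\<rfloor>
      = (int n + 2 * ((int n - 3) div 7)) div 3"
    using floor_divide_of_int_eq[of "int n + 2 * ((int n - 3) div 7)" 3] by simp
  moreover have "(int n + 2 * ((int n - 3) div 7)) div 3 \<le> int (Sd n)"
  proof (cases "n = 2")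
    case False
    then have "(int n + 2 * ((int n - 3) div 7)) div 3 = int ((n + 2 * ((n - 3) div 7)) div 3)"
      using assms by (simp add: of_nat_diff zdiv_int)
    then show ?thesis using Sd_ge_lower_bound[of n] False assms by simp
  qed simp
  ultimately show ?thesis using Sd_le_half[of n] by simp
qed

end
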